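(* Let $\mathcal{D}$ be a $\{K_3,K_4\}$-decomposition of $K_{18}$ with $\alpha=13$, let $W$ be the set of vertices $x$ with $\alpha_x\ge 2$, and for $i\in\{0,1,2,3\}$ let $t_i$ be the number of copies of $K_3$ in $\mathcal{D}$ having exactly $i$ vertices in $W$. Then $(t_0,t_1,t_2,t_3)\neq(1,0,8,4)$.
   Context: A $\{K_3,K_4\}$-decomposition of $K_v$ is a collection of subgraphs, each isomorphic to $K_3$ or $K_4$, such that every edge of $K_v$ lies in exactly one of them. $\alpha$ is the number of copies of $K_3$ in the decomposition, and for a vertex $x$, $\alpha_x$ is the number of copies of $K_3$ in the decomposition containing $x$. *)

theory Defs
  imports Main
begin

text \<open>Blocks are determined by their vertex sets.\<close>
definition K34_decomp :: "'a set \<Rightarrow> 'a set set \<Rightarrow> bool" where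
  "K34_decomp V D \<longleftrightarrow>
     (\<forall>B\<in>D. B \<subseteq> V \<and> (card B = 3 \<or> card B = 4)) \<and>
     (\<forall>x\<in>V. \<forall>y\<in>V. x \<noteq> y \<longrightarrow> (\<exists>!B. B \<in> D \<and> x \<in> B \<and> y \<in> B))"

definition triangles :: "'a set set \<Rightarrow> 'a set set" where
  "triangles D = {B \<in> D. card B = 3}"

definition alpha_at :: "'a set set \<Rightarrow> 'a \<Rightarrow> nat" where
  "alpha_at D x = card {B \<in> triangles D. x \<in> B}"

end

theory Submission imports Defs begin

text \<open>Counting edges gives 19 copies of \<open>K\<^sub>4\<close>, and counting the 17 edges at a vertex gives
\<open>2\<alpha>\<^sub>x + 3\<beta>\<^sub>x = 17\<close> (\<open>\<beta>\<^sub>x\<close> the number of copies of \<open>K\<^sub>4\<close> at \<open>x\<close>), so \<open>\<alpha>\<^sub>x = 1\<close> off \<open>W\<close> and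
\<open>\<alpha>\<^sub>x \<ge> 4\<close> on \<open>W\<close>.  The profile \<open>(1,0,8,4)\<close> gives \<open>\<Sum>\<^sub>x\<^sub>\<in>\<^sub>W \<alpha>\<^sub>x = 28\<close>, which with
\<open>\<Sum>\<^sub>x \<alpha>\<^sub>x = 39\<close> forces \<open>|W| = 7\<close> and \<open>\<alpha>\<^sub>x = 4\<close>, \<open>\<beta>\<^sub>x = 3\<close> on \<open>W\<close>.  Then the 19 copies of \<open>K\<^sub>4\<close>
meet \<open>W\<close> in 21 points, so they contain at least two pairs inside \<open>W\<close>; but the triangles
already contain 20 of the 21 such pairs.\<close>

lemma sum_card_Int_eq_sum_card_blocks_containing:
  assumes "finite F" "finite A"
  shows "(\<Sum>B\<in>F. card (B \<inter> A)) = (\<Sum>x\<in>A. card {B\<in>F. x \<in> B})"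
proof -
  have "card (B \<inter> A) = (\<Sum>x\<in>A. if x \<in> B then 1 else 0)" for B
    using assms(2) by (simp add: sum.If_cases Int_commute)
  moreover have "card {B\<in>F. x \<in> B} = (\<Sum>B\<in>F. if x \<in> B then 1 else 0)" for x
    using assms(1) by (simp add: sum.If_cases Collect_conj_eq Int_commute)
  ultimately show ?thesis
    by (simp only: sum.swap[of _ F A])
qed

lemma sum_eq_sum_card_fibres:
  assumes "finite T" "finite I" "g ` T \<subseteq> I"
  shows "(\<Sum>B\<in>T. f (g B)) = (\<Sum>i\<in>I. card {B\<in>T. g B = i} * f i)"
proof -
  have "(\<Sum>B\<in>T. f (g B)) = (\<Sum>i\<in>I. \<Sum>B\<in>{B. B \<in> T \<and> g B = i}. f (g B))"
    using sum.group[OF assms, of "\<lambda>B. f (g B)"] by simp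
  also have "\<dots> = (\<Sum>i\<in>I. card {B\<in>T. g B = i} * f i)"
    by (intro sum.cong refl) simp
  finally show ?thesis .
qed

lemma le_Suc_choose_two: "n \<le> Suc (n choose 2)"
  by (cases n) (simp_all add: numeral_2_eq_2)

locale pair_decomposition =
  fixes V :: "'a set" and D :: "'a set set"
  assumes finite_points: "finite V"
    and block_subset: "B \<in> D \<Longrightarrow> B \<subseteq> V"
    and unique_block: "x \<in> V \<Longrightarrow> y \<in> V \<Longrightarrow> x \<noteq> y \<Longrightarrow> \<exists>!B. B \<in> D \<and> x \<in> B \<and> y \<in> B"
begin

lemma finite_blocks: "finite D"
  using block_subset finite_points by (meson Pow_iff finite_Pow_iff finite_subset subsetI)

lemma finite_block: "B \<in> D \<Longrightarrow> finite B"
  using block_subset finite_points finite_subset by blast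

lemma block_eq_if_pair:
  assumes "B \<in> D" "B' \<in> D" "x \<in> B" "y \<in> B" "x \<in> B'" "y \<in> B'" "x \<noteq> y"
  shows "B = B'"
  using assms unique_block[of x y] block_subset by blast

lemma sum_card_Int_choose_two:
  assumes "S \<subseteq> V"
  shows "(\<Sum>B\<in>D. card (B \<inter> S) choose 2) = card S choose 2"
proof -
  define pairs where "pairs X = {e. e \<subseteq> X \<and> card e = 2}" for X :: "'a set"
  have card_pairs: "card (pairs X) = card X choose 2" if "finite X" for X
    unfolding pairs_def using n_subsets[OF that] by simp
  have "pairs S = (\<Union>B\<in>D. pairs (B \<inter> S))"
  proof (intro equalityI subsetI)
    fix e assume "e \<in> pairs S"
    then obtain x y where "e = {x, y}" "x \<noteq> y" "e \<subseteq> S"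
      unfolding pairs_def by (auto simp: card_2_iff)
    moreover from this obtain B where "B \<in> D" "x \<in> B" "y \<in> B"
      using unique_block[of x y] assms by auto
    ultimately show "e \<in> (\<Union>B\<in>D. pairs (B \<inter> S))"
      unfolding pairs_def by auto
  qed (auto simp: pairs_def)
  moreover have "pairs (B \<inter> S) \<inter> pairs (B' \<inter> S) = {}"
    if "B \<in> D" "B' \<in> D" "B \<noteq> B'" for B B'
  proof -
    have False if "e \<subseteq> B \<inter> S" "e \<subseteq> B' \<inter> S" "card e = 2" for e
    proof -
      obtain x y where "e = {x, y}" "x \<noteq> y"
        using \<open>card e = 2\<close> by (auto simp: card_2_iff)
      then have "B = B'"
        using that block_eq_if_pair[OF \<open>B \<in> D\<close> \<open>B' \<in> D\<close>, of x y] by auto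
      with \<open>B \<noteq> B'\<close> show False ..
    qed
    then show ?thesis
      unfolding pairs_def by blast
  qed
  ultimately have "card (pairs S) = (\<Sum>B\<in>D. card (pairs (B \<inter> S)))"
    using finite_blocks finite_block by (simp add: card_UN_disjoint pairs_def)
  moreover have "finite S"
    using assms finite_points finite_subset by blast
  ultimately show ?thesis
    using card_pairs finite_block by simp
qed

lemma sum_card_blocks_through:
  assumes "x \<in> V"
  shows "(\<Sum>B\<in>{B\<in>D. x \<in> B}. card B - 1) = card V - 1"
proof -
  have "V - {x} = (\<Union>B\<in>{B\<in>D. x \<in> B}. B - {x})"
  proof (intro equalityI subsetI)
    fix y assume "y \<in> V - {x}"
    then obtain B where "B \<in> D" "x \<in> B" "y \<in> B"
      using unique_block[of x y] assms by auto
    with \<open>y \<in> V - {x}\<close> show "y \<in> (\<Union>B\<in>{B\<in>D. x \<in> B}. B - {x})"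
      by auto
  qed (use block_subset in auto)
  moreover have "card (\<Union>B\<in>{B\<in>D. x \<in> B}. B - {x}) = (\<Sum>B\<in>{B\<in>D. x \<in> B}. card (B - {x}))"
  proof (rule card_UN_disjoint)
    show "\<forall>B\<in>{B\<in>D. x \<in> B}. \<forall>B'\<in>{B\<in>D. x \<in> B}. B \<noteq> B' \<longrightarrow> (B - {x}) \<inter> (B' - {x}) = {}"
      using block_eq_if_pair[of _ _ x] by blast
  qed (use finite_blocks finite_block in auto)
  ultimately have "card (V - {x}) = (\<Sum>B\<in>{B\<in>D. x \<in> B}. card (B - {x}))"
    by simp
  then show ?thesis
    using assms finite_points finite_block by simp
qed

end

definition quads :: "'a set set \<Rightarrow> 'a set set" where
  "quads D = {B \<in> D. card B = 4}"

definition beta_at :: "'a set set \<Rightarrow> 'a \<Rightarrow> nat" where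
  "beta_at D x = card {B \<in> quads D. x \<in> B}"

locale K34_decomposition = pair_decomposition +
  assumes block_card: "B \<in> D \<Longrightarrow> card B = 3 \<or> card B = 4"
begin

lemma finite_triangles: "finite (triangles D)"
  using finite_blocks by (simp add: triangles_def)

lemma finite_quads: "finite (quads D)"
  using finite_blocks by (simp add: quads_def)

lemma sum_blocks_split:
  "(\<Sum>B\<in>D. f B) = (\<Sum>B\<in>triangles D. f B) + (\<Sum>B\<in>quads D. f B)"
proof -
  have "D = triangles D \<union> quads D" "triangles D \<inter> quads D = {}"
    using block_card by (auto simp: triangles_def quads_def)
  then show ?thesis
    using finite_triangles finite_quads by (metis sum.union_disjoint)
qed

lemma card_triangles_quads: "3 * card (triangles D) + 6 * card (quads D) = card V choose 2"
proof -
  have "card V choose 2 = (\<Sum>B\<in>D. card (B \<inter> V) choose 2)"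
    using sum_card_Int_choose_two by simp
  also have "\<dots> = (\<Sum>B\<in>triangles D. 3) + (\<Sum>B\<in>quads D. 6)"
    unfolding sum_blocks_split
    by (intro arg_cong2[where f = "(+)"] sum.cong refl)
      (auto simp: triangles_def quads_def Int_absorb2 block_subset choose_two)
  finally show ?thesis
    by simp
qed

lemma degree_equation:
  assumes "x \<in> V"
  shows "2 * alpha_at D x + 3 * beta_at D x = card V - 1"
proof -
  have "card V - 1 = (\<Sum>B\<in>D. if x \<in> B then card B - 1 else 0)"
    using sum_card_blocks_through[OF assms] sum.inter_filter[OF finite_blocks] by metis
  also have "\<dots> = (\<Sum>B\<in>triangles D. if x \<in> B then 2 else 0) + (\<Sum>B\<in>quads D. if x \<in> B then 3 else 0)"
    unfolding sum_blocks_split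
    by (intro arg_cong2[where f = "(+)"] sum.cong refl) (auto simp: triangles_def quads_def)
  also have "\<dots> = 2 * alpha_at D x + 3 * beta_at D x"
    using sum.inter_filter[OF finite_triangles, of "\<lambda>_. 2::nat" "\<lambda>B. x \<in> B"]
      sum.inter_filter[OF finite_quads, of "\<lambda>_. 3::nat" "\<lambda>B. x \<in> B"]
    by (simp add: alpha_at_def beta_at_def)
  finally show ?thesis
    by simp
qed

lemma sum_alpha_at: "finite A \<Longrightarrow> (\<Sum>x\<in>A. alpha_at D x) = (\<Sum>B\<in>triangles D. card (B \<inter> A))"
  using sum_card_Int_eq_sum_card_blocks_containing[OF finite_triangles] by (simp add: alpha_at_def)

lemma sum_beta_at: "finite A \<Longrightarrow> (\<Sum>x\<in>A. beta_at D x) = (\<Sum>B\<in>quads D. card (B \<inter> A))"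
  using sum_card_Int_eq_sum_card_blocks_containing[OF finite_quads] by (simp add: beta_at_def)

end

lemma K34_decomposition_if_K34_decomp:
  assumes "finite V" "K34_decomp V D"
  shows "K34_decomposition V D"
  using assms unfolding K34_decomp_def by unfold_locales auto

locale K18_13_decomposition = K34_decomposition +
  assumes card_points: "card V = 18"
    and card_triangles: "card (triangles D) = 13"
begin

definition heavy :: "'a set" where
  "heavy = {x \<in> V. 2 \<le> alpha_at D x}"

lemma heavy_subset: "heavy \<subseteq> V"
  by (auto simp: heavy_def)

lemma finite_heavy: "finite heavy"
  using heavy_subset finite_points finite_subset by blast

lemma card_quads: "card (quads D) = 19"
  using card_triangles_quads card_points card_triangles by (simp add: choose_two)

lemma degree_equation_17: "x \<in> V \<Longrightarrow> 2 * alpha_at D x + 3 * beta_at D x = 17"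
  using degree_equation card_points by simp

lemma alpha_at_light:
  assumes "x \<in> V - heavy"
  shows "alpha_at D x = 1"
proof -
  have "alpha_at D x < 2" "2 * alpha_at D x + 3 * beta_at D x = 17"
    using assms degree_equation_17 by (auto simp: heavy_def)
  then show ?thesis
    by presburger
qed

lemma alpha_at_heavy:
  assumes "x \<in> heavy"
  shows "4 \<le> alpha_at D x"
proof -
  have "2 \<le> alpha_at D x" "2 * alpha_at D x + 3 * beta_at D x = 17"
    using assms degree_equation_17 by (auto simp: heavy_def)
  then show ?thesis
    by presburger
qed

lemma sum_alpha_at_points: "(\<Sum>x\<in>V. alpha_at D x) = 39"
proof -
  have "(\<Sum>B\<in>triangles D. card (B \<inter> V)) = (\<Sum>B\<in>triangles D. 3)"
    by (intro sum.cong refl) (auto simp: triangles_def Int_absorb2 block_subset)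
  then show ?thesis
    using sum_alpha_at[OF finite_points] card_triangles by simp
qed

lemma heavy_regular_if_sum_alpha_at:
  assumes "(\<Sum>x\<in>heavy. alpha_at D x) = 28"
  shows "card heavy = 7" and "x \<in> heavy \<Longrightarrow> alpha_at D x = 4"
proof -
  have "(\<Sum>x\<in>V - heavy. alpha_at D x) = 11"
    using sum.subset_diff[OF heavy_subset finite_points, of "alpha_at D"]
      sum_alpha_at_points assms by simp
  moreover have "(\<Sum>x\<in>V - heavy. alpha_at D x) = card (V - heavy)"
    using alpha_at_light by simp
  ultimately show card_heavy: "card heavy = 7"
    using card_Diff_subset[OF finite_heavy heavy_subset] card_points heavy_subset
      card_mono[OF finite_points] by simp
  have "(\<Sum>x\<in>heavy. alpha_at D x - 4) = (\<Sum>x\<in>heavy. alpha_at D x) - (\<Sum>x\<in>heavy. 4)"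
    using alpha_at_heavy by (intro sum_subtractf_nat) auto
  then have "(\<Sum>x\<in>heavy. alpha_at D x - 4) = 0"
    using assms card_heavy by simp
  then show "x \<in> heavy \<Longrightarrow> alpha_at D x = 4"
    using finite_heavy alpha_at_heavy[of x] by (auto intro!: le_antisym)
qed

lemma sum_triangles_heavy_pairs_le:
  assumes "(\<Sum>B\<in>triangles D. card (B \<inter> heavy)) = 28"
  shows "(\<Sum>B\<in>triangles D. card (B \<inter> heavy) choose 2) \<le> 19"
proof -
  have sum_alpha: "(\<Sum>x\<in>heavy. alpha_at D x) = 28"
    using sum_alpha_at[OF finite_heavy] assms by simp
  have "beta_at D x = 3" if "x \<in> heavy" for x
    using degree_equation_17[of x] heavy_regular_if_sum_alpha_at(2)[OF sum_alpha that]
      heavy_subset that by auto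
  then have "21 = (\<Sum>B\<in>quads D. card (B \<inter> heavy))"
    using sum_beta_at[OF finite_heavy] heavy_regular_if_sum_alpha_at(1)[OF sum_alpha] by simp
  also have "\<dots> \<le> (\<Sum>B\<in>quads D. Suc (card (B \<inter> heavy) choose 2))"
    by (intro sum_mono le_Suc_choose_two)
  also have "\<dots> = 19 + (\<Sum>B\<in>quads D. card (B \<inter> heavy) choose 2)"
    using card_quads by (simp add: sum_Suc)
  finally have "2 \<le> (\<Sum>B\<in>quads D. card (B \<inter> heavy) choose 2)"
    by simp
  moreover have "(\<Sum>B\<in>triangles D. card (B \<inter> heavy) choose 2)
      + (\<Sum>B\<in>quads D. card (B \<inter> heavy) choose 2) = 21"
    using sum_card_Int_choose_two[OF heavy_subset] heavy_regular_if_sum_alpha_at(1)[OF sum_alpha]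
    by (simp add: sum_blocks_split choose_two)
  ultimately show ?thesis
    by linarith
qed

end

theorem mainTheorem14:
  fixes V :: "'a set" and D :: "'a set set"
  assumes "finite V" and "card V = 18"
    and "K34_decomp V D"
    and "card (triangles D) = 13"
  shows "(let W = {x \<in> V. alpha_at D x \<ge> 2};
              t = (\<lambda>i::nat. card {B \<in> triangles D. card (B \<inter> W) = i})
          in (t 0, t 1, t 2, t 3) \<noteq> (1, 0, 8, 4))"
proof -
  interpret K18_13_decomposition V D
    using K34_decomposition_if_K34_decomp[OF assms(1,3)] assms(2,4)
    by (intro K18_13_decomposition.intro K18_13_decomposition_axioms.intro)
  have card_triangle_Int_heavy_le: "card (B \<inter> heavy) \<le> 3" if "B \<in> triangles D" for B
    using that finite_triangles card_mono[of B "B \<inter> heavy"]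
    by (auto simp: triangles_def finite_block)
  show ?thesis
    unfolding Let_def heavy_def[symmetric]
  proof
    assume profile: "(card {B \<in> triangles D. card (B \<inter> heavy) = 0},
        card {B \<in> triangles D. card (B \<inter> heavy) = 1}, card {B \<in> triangles D. card (B \<inter> heavy) = 2},
        card {B \<in> triangles D. card (B \<inter> heavy) = 3}) = (1, 0, 8, 4)"
    have "(\<Sum>B\<in>triangles D. f (card (B \<inter> heavy))) = f 0 + 8 * f 2 + 4 * f 3" for f :: "nat \<Rightarrow> nat"
      using sum_eq_sum_card_fibres[OF finite_triangles, of "{0, 1, 2, 3}" "\<lambda>B. card (B \<inter> heavy)" f]
        card_triangle_Int_heavy_le profile by fastforce
    from this[of id] this[of "\<lambda>k. k choose 2"] show False
      using sum_triangles_heavy_pairs_le by (simp add: choose_two)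
  qed
qed

end
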